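(* Let $k\ge 10$, and consider the procedure $\mathcal{A}$ (described in the context) started on an input $(\mathcal{L},\ell,\tau)$ with $\mathrm{rank}(\mathcal{L})=n\ge k$, $\tau\ge 0$ and $1\le\ell\le n-k+1$. Then every invocation $\mathcal{A}(\mathcal{L}_0,\ell_0,\tau_0)$ occurring in the recursion, with $n_0:=\mathrm{rank}(\mathcal{L}_0)$, satisfies $n_0\ge k$, $1\le\ell_0<n_0$, and \[ \min\{\ell_0,\;n_0-\ell_0\}\le n_0-k+1 . \] In particular, every invocation with $n_0=k$ has $\ell_0\in\{1,k-1\}$.
   Context: Notation: for a lattice $\mathcal{L}$, $\mathcal{L}^*$ is its dual lattice, and for a lattice $\mathcal{M}$, $\mathcal{M}^\perp$ is the orthogonal complement of $\mathrm{span}(\mathcal{M})$; for a rank-$r$ sublattice $\mathcal{M}\subseteq \mathcal{L}^*$, $\mathcal{L}\cap\mathcal{M}^\perp$ has rank $\mathrm{rank}(\mathcal{L})-r$. Sublattices returned by $\mathcal{A}(\mathcal{L},\ell,\tau)$ have rank $\ell$. Procedure $\mathcal{A}(\mathcal{L},\ell,\tau)$, with $n:=\mathrm{rank}(\mathcal{L})$ and $n>\ell\ge1$, $\tau\ge 0$ integers: 1. Duality step: if $\max\{1,(n-k)/5\}<\ell<n/2$ or $\ell\ge n-\max\{1,(n-k)/10\}$, output $\mathcal{L}\cap\mathcal{A}(\mathcal{L}^*,n-\ell,\tau)^\perp$. 2. Base cases: (a) if $n=k$ and $\ell=1$, call an HSVP oracle on $\mathcal{L}$ and output the lattice generated by the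 returned vector; (b) if $\tau=0$, output the lattice generated by the first $\ell$ vectors of an LLL-reduced basis of $\mathcal{L}$. 3. Recursive step: otherwise set $\ell^*=\lceil (n-k)/20\rceil$, $b=1$ if $\ell<n/2$ and $b=0$ otherwise, compute $\mathcal{M}:=\mathcal{A}(\mathcal{L}^*,\ell^*,\tau-b)$ and output $\mathcal{A}(\mathcal{L}\cap\mathcal{M}^\perp,\ell,\tau)$. The sequence of parameters $(n,\ell,\tau)$ of the invocations depends only on the initial parameters. *)

theory Defs
  imports Complex_Main
begin

text \<open>Only the parameters (n, l, tau) = (rank, target rank, recursion budget) of the
invocations of procedure A matter; they depend only on the initial parameters.
An invocation A(L, l, tau) with rank L = n is represented by the triple (n, l, tau).\<close>

definition dual_cond :: "nat \<Rightarrow> nat \<Rightarrow> nat \<Rightarrow> bool" where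
  "dual_cond k n l \<longleftrightarrow>
     (max 1 ((real n - real k) / 5) < real l \<and> real l < real n / 2)
   \<or> real l \<ge> real n - max 1 ((real n - real k) / 10)"

definition base_cond :: "nat \<Rightarrow> nat \<Rightarrow> nat \<Rightarrow> nat \<Rightarrow> bool" where
  "base_cond k n l \<tau> \<longleftrightarrow> (n = k \<and> l = 1) \<or> \<tau> = 0"

definition lstar :: "nat \<Rightarrow> nat \<Rightarrow> nat" where
  "lstar k n = nat \<lceil>(real n - real k) / 20\<rceil>"

definition bbit :: "nat \<Rightarrow> nat \<Rightarrow> nat" where
  "bbit n l = (if real l < real n / 2 then 1 else 0)"

text \<open>calls k P Q: the invocation with parameters P directly invokes one with parameters Q.
Dual lattice has the same rank n; L \<inter> M^perp has rank n - lstar.\<close>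
inductive calls :: "nat \<Rightarrow> nat \<times> nat \<times> nat \<Rightarrow> nat \<times> nat \<times> nat \<Rightarrow> bool" for k where
  dual: "dual_cond k n l \<Longrightarrow> calls k (n, l, \<tau>) (n, n - l, \<tau>)"
| rec1: "\<not> dual_cond k n l \<Longrightarrow> \<not> base_cond k n l \<tau> \<Longrightarrow>
         calls k (n, l, \<tau>) (n, lstar k n, \<tau> - bbit n l)"
| rec2: "\<not> dual_cond k n l \<Longrightarrow> \<not> base_cond k n l \<tau> \<Longrightarrow>
         calls k (n, l, \<tau>) (n - lstar k n, l, \<tau>)"

end

theory Submission
  imports Defs
begin

text \<open>The recursion keeps the parameters (n, l) inside the region where k \<le> n, 0 < l < n and
  the smaller of l and n - l is at most n - k + 1. The duality step is the symmetry l \<mapsto> n - l of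
  this region. At rank n = k the region only contains l = 1 and l = k - 1, which are base cases
  or trigger the duality step, so a recursive step happens only for n > k. Then
  l* \<approx> (n - k)/20 is small compared with n - k, and the failure of the duality condition keeps
  l (resp. n - l) away from the boundary by (n - k)/5 (resp. (n - k)/10), which is more than the
  rank loss l* of the sublattice.\<close>

definition admissible :: "nat \<Rightarrow> nat \<Rightarrow> nat \<Rightarrow> bool" where
  "admissible k n l \<longleftrightarrow> k \<le> n \<and> 1 \<le> l \<and> l < n \<and> min l (n - l) \<le> n - k + 1"

lemma admissible_rank_eq_cases:
  assumes "admissible k k l"
  shows "l = 1 \<or> l = k - 1"
  using assms by (auto simp: admissible_def min_def split: if_splits)

lemma admissible_dual:
  assumes "admissible k n l"
  shows "admissible k n (n - l)"
  using assms by (auto simp: admissible_def min_def split: if_splits)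

lemma recursive_step_rank_gt:
  assumes "admissible k n l" and "\<not> dual_cond k n l" and "\<not> base_cond k n l t"
  shows "k < n"
proof (rule ccontr)
  assume "\<not> k < n"
  with assms(1) have n: "n = k" by (simp add: admissible_def)
  with assms(1) have "l = 1 \<or> l = k - 1" using admissible_rank_eq_cases by blast
  moreover have "l \<noteq> 1" using assms(3) n by (simp add: base_cond_def)
  moreover have "\<not> real n - 1 \<le> real l" using assms(2) n by (simp add: dual_cond_def)
  ultimately show False using assms(1) n by (auto simp: admissible_def)
qed

lemma lstar_bounds:
  assumes "k < n"
  shows "1 \<le> lstar k n"
    and "(real n - real k) / 20 \<le> real (lstar k n)"
    and "real (lstar k n) < (real n - real k) / 20 + 1"
proof -
  have pos: "1 \<le> \<lceil>(real n - real k) / 20\<rceil>" using assms by simp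
  then have lstar: "real (lstar k n) = of_int \<lceil>(real n - real k) / 20\<rceil>"
    by (simp add: lstar_def)
  show "1 \<le> lstar k n" using pos unfolding lstar_def by linarith
  show "(real n - real k) / 20 \<le> real (lstar k n)"
    unfolding lstar by (rule le_of_int_ceiling)
  show "real (lstar k n) < (real n - real k) / 20 + 1"
    unfolding lstar using ceiling_correct[of "(real n - real k) / 20"] by linarith
qed

lemma lstar_le_rank_diff:
  assumes "k < n"
  shows "lstar k n \<le> n - k"
proof -
  have "1 \<le> real n - real k" using assms by simp
  then have "real (lstar k n) < real n - real k + 1"
    using lstar_bounds(3)[OF assms] by (simp add: field_simps)
  then show ?thesis by linarith
qed

lemma admissible_lstar:
  assumes "0 < k" and "k < n"
  shows "admissible k n (lstar k n)"
  using lstar_bounds(1)[OF assms(2)] lstar_le_rank_diff[OF assms(2)] assms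
  by (auto simp: admissible_def)

lemma admissible_sublattice:
  assumes "2 \<le> k" and adm: "admissible k n l" and nd: "\<not> dual_cond k n l" and "k < n"
  shows "admissible k (n - lstar k n) l"
proof -
  define s where "s = lstar k n"
  define m where "m = n - k"
  have m: "real m = real n - real k" "n = k + m" using \<open>k < n\<close> by (simp_all add: m_def)
  have s: "1 \<le> s" "real m / 20 \<le> real s" "real s < real m / 20 + 1"
    using lstar_bounds[OF \<open>k < n\<close>] m(1) by (simp_all add: s_def)
  have "s \<le> m" using s by linarith
  have l: "1 \<le> l" "l < n" "min l (n - l) \<le> m + 1"
    using adm by (auto simp: admissible_def m_def)
  have nd': "\<not> (max 1 (real m / 5) < real l \<and> real l < real n / 2)"
    "real l < real n - max 1 (real m / 10)"
    using nd unfolding dual_cond_def m(1) by auto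
  show ?thesis
  proof (cases "real l < real n / 2")
    case True
    then have "real l \<le> max 1 (real m / 5)" using nd' by auto
    moreover have "real m / 5 \<le> real m - real s + 1" if "1 < real m / 5"
      using s(3) that by (simp add: field_simps)
    ultimately have "real l \<le> real m - real s + 1" using \<open>s \<le> m\<close> by linarith
    then have "l \<le> m - s + 1" using \<open>s \<le> m\<close> by linarith
    then show ?thesis using l(1) \<open>s \<le> m\<close> m(2) \<open>2 \<le> k\<close>
      by (auto simp: admissible_def s_def min_def)
  next
    case False
    have "s < n - l"
    proof (cases "m \<le> 20")
      case True
      then have "s \<le> 1" using s by linarith
      then show ?thesis using nd'(2) l(2) by linarith
    next
      case False
      then have "real m / 20 + 1 \<le> real m / 10" by simp
      then show ?thesis using s nd'(2) l(2) by linarith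
    qed
    moreover have "n - l \<le> m + 1" using False l by (simp add: min_def split: if_splits)
    ultimately show ?thesis using l(1,2) \<open>s \<le> m\<close> m(2)
      by (auto simp: admissible_def s_def min_def)
  qed
qed

lemma calls_preserves_admissible:
  assumes "2 \<le> k" and "calls k (n, l, t) (n', l', t')" and adm: "admissible k n l"
  shows "admissible k n' l'"
  using assms(2)
proof cases
  case dual
  then show ?thesis using admissible_dual[OF adm] by simp
next
  case rec1
  then have "k < n" using recursive_step_rank_gt[OF adm] by simp
  then show ?thesis using rec1 admissible_lstar \<open>2 \<le> k\<close> by simp
next
  case rec2
  then have "k < n" using recursive_step_rank_gt[OF adm] by simp
  then show ?thesis using rec2 admissible_sublattice[OF \<open>2 \<le> k\<close> adm] by simp
qed

lemma calls_rtranclp_preserves_admissible: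
  assumes "2 \<le> k" and "(calls k)\<^sup>*\<^sup>* (n, l, t) (n', l', t')" and "admissible k n l"
  shows "admissible k n' l'"
  using assms(2)
proof (induction "(n', l', t')" arbitrary: n' l' t' rule: rtranclp_induct)
  case base
  then show ?case using assms(3) by simp
next
  case (step q)
  obtain n'' l'' t'' where "q = (n'', l'', t'')" by (cases q)
  with step show ?case using calls_preserves_admissible[OF assms(1)] by blast
qed

theorem mainTheorem2:
  fixes k n l \<tau> n0 l0 \<tau>0 :: nat
  assumes "k \<ge> 10" and "n \<ge> k" and "1 \<le> l" and "l \<le> n - k + 1"
    and "(calls k)\<^sup>*\<^sup>* (n, l, \<tau>) (n0, l0, \<tau>0)"
  shows "n0 \<ge> k \<and> 1 \<le> l0 \<and> l0 < n0 \<and> min l0 (n0 - l0) \<le> n0 - k + 1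
         \<and> (n0 = k \<longrightarrow> l0 \<in> {1, k - 1})"
proof -
  have "admissible k n l" using assms(1-4) by (auto simp: admissible_def)
  then have "admissible k n0 l0"
    using calls_rtranclp_preserves_admissible[OF _ assms(5)] assms(1) by simp
  then show ?thesis using admissible_rank_eq_cases[of k l0] by (auto simp: admissible_def)
qed

end
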